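(* Let $p\ge 1$ and $n_1,\ldots,n_p$ be positive integers, $N=n_1\cdots n_p$, and $k$ a positive integer. Then: (a) $\Sigma^k_{pure}(n_1,\ldots,n_p)$ is a connected, compact subset of $\Sigma(n_1,\ldots,n_p)$. In particular, if $\Sigma^k_{pure}(n_1,\ldots,n_p)\neq\Sigma(n_1,\ldots,n_p)$, then it is not dense in $\Sigma(n_1,\ldots,n_p)$ and its complement in $\Sigma(n_1,\ldots,n_p)$ is (relatively) open. (b) If $k<\dfrac{n_1^2\cdots n_p^2}{1-2p+\sum_{j=1}^p 2n_j}$, then $\Sigma^k_{pure}(n_1,\ldots,n_p)$ has measure $0$ in $\Sigma(n_1,\ldots,n_p)$.
   Context: For a positive integer $w$, a density matrix on $\mathbb{C}^w$ is a $w\times w$ complex Hermitian positive semi-definite matrix of trace $1$; let $\mathcal{DM}(w)$ denote the set of these; a pure state is a density matrix of rank one (an orthogonal projection onto a line). Let $N=n_1\cdots n_p$ and identify $\mathbb{C}^N=\mathbb{C}^{n_1}\otimes\cdots\otimes\mathbb{C}^{n_p}$. A product density matrix is one of the form $A_1\otimes\cdots\otimes A_p$ with $A_i\in\mathcal{DM}(n_i)$; it is a pure product state if every $A_i$ is a pure state. $\Sigma(n_1,\ldots,n_p)\subset\mathcal{DM}(N)$ is the set of separable density matrices, i.e. convex combinations of (finitely many) product density matrices. $\Sigma^k_{pure}(n_1,\ldots,n_p)$ is the set of $A\in\Sigma(n_1,\ldots,n_p)$ that can be written as a convex combination of at most $k$ pure product states (i.e. whose optimal pure state ensemble length is $k$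 or fewer). Measure is $(N^2-1)$-dimensional Lebesgue measure on the real affine hyperplane $\tau_1(N)$ of $N\times N$ complex Hermitian matrices of trace $1$ (which contains $\Sigma(n_1,\ldots,n_p)$). *)

theory Defs
  imports "HOL-Analysis.Analysis"
begin

text \<open>Matrices are represented as functions nat => nat => complex; a w x w matrix
  is one whose entries vanish outside the index range {0..<w} x {0..<w}.
  The topology used is the product topology on such functions (on the set of
  matrices supported in {0..<w} x {0..<w} it coincides with the Euclidean one).\<close>

type_synonym cmat = "nat \<Rightarrow> nat \<Rightarrow> complex"

definition supported_in :: "nat \<Rightarrow> cmat \<Rightarrow> bool" where
  "supported_in w A \<longleftrightarrow> (\<forall>i j. (w \<le> i \<or> w \<le> j) \<longrightarrow> A i j = 0)"

definition density_matrix :: "nat \<Rightarrow> cmat \<Rightarrow> bool" where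
  "density_matrix w A \<longleftrightarrow>
     supported_in w A \<and>
     (\<forall>i<w. \<forall>j<w. A j i = cnj (A i j)) \<and>
     (\<forall>x :: nat \<Rightarrow> complex. 0 \<le> Re (\<Sum>i<w. \<Sum>j<w. cnj (x i) * A i j * x j)) \<and>
     (\<Sum>i<w. A i i) = 1"

definition pure_state :: "nat \<Rightarrow> cmat \<Rightarrow> bool" where
  "pure_state w A \<longleftrightarrow> density_matrix w A \<and>
     (\<exists>v :: nat \<Rightarrow> complex. (\<Sum>i<w. (cmod (v i))\<^sup>2) = 1 \<and>
        A = (\<lambda>i j. if i < w \<and> j < w then v i * cnj (v j) else 0))"

fun kron :: "nat list \<Rightarrow> cmat list \<Rightarrow> cmat" where
  "kron [] _ = (\<lambda>i j. if i = 0 \<and> j = 0 then 1 else 0)"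
| "kron (n # ns) [] = (\<lambda>i j. 0)"
| "kron (n # ns) (A # As) =
     (let m = prod_list ns; B = kron ns As in
      (\<lambda>i j. if i < n * m \<and> j < n * m
              then A (i div m) (j div m) * B (i mod m) (j mod m) else 0))"

definition product_dm :: "nat list \<Rightarrow> cmat \<Rightarrow> bool" where
  "product_dm ns A \<longleftrightarrow> (\<exists>As. length As = length ns \<and>
     (\<forall>i<length ns. density_matrix (ns ! i) (As ! i)) \<and> A = kron ns As)"

definition pure_product_state :: "nat list \<Rightarrow> cmat \<Rightarrow> bool" where
  "pure_product_state ns A \<longleftrightarrow> (\<exists>As. length As = length ns \<and>
     (\<forall>i<length ns. pure_state (ns ! i) (As ! i)) \<and> A = kron ns As)"

definition convex_comb_of :: "(cmat \<Rightarrow> bool) \<Rightarrow> nat \<Rightarrow> cmat \<Rightarrow> bool" where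
  "convex_comb_of P m A \<longleftrightarrow> (\<exists>(c :: nat \<Rightarrow> real) (B :: nat \<Rightarrow> cmat).
     (\<forall>l<m. 0 \<le> c l \<and> P (B l)) \<and> (\<Sum>l<m. c l) = 1 \<and>
     A = (\<lambda>i j. \<Sum>l<m. complex_of_real (c l) * B l i j))"

definition Sigma_sep :: "nat list \<Rightarrow> cmat set" where
  "Sigma_sep ns = {A. \<exists>m. convex_comb_of (product_dm ns) m A}"

definition Sigma_pure :: "nat \<Rightarrow> nat list \<Rightarrow> cmat set" where
  "Sigma_pure k ns = {A \<in> Sigma_sep ns. \<exists>m\<le>k. convex_comb_of (pure_product_state ns) m A}"

text \<open>Real affine coordinates on the trace-one hyperplane of N x N Hermitian
  matrices: the coordinate with index i < N*N - 1, (a,b) = (i div N, i mod N), is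
  Re M_aa if a = b, Re M_ab if a < b, Im M_ba if a > b.  The last diagonal entry
  (index N*N-1) is omitted, being determined by the trace condition.  This is an
  affine isomorphism of tau_1(N) onto R^(N^2-1).\<close>
definition hcoord :: "nat \<Rightarrow> cmat \<Rightarrow> (nat \<Rightarrow> real)" where
  "hcoord N M = restrict (\<lambda>i. let a = i div N; b = i mod N in
      if a = b then Re (M a a) else if a < b then Re (M a b) else Im (M b a)) {..<N * N - 1}"

end

(*
  A mixture of at most k pure product states is the image of a compact parameter space
  (k weights in the standard simplex and, for each weight and each tensor factor j, a unit vector
  in C^(n_j)) under a continuous map; this gives compactness, hence closedness and the statements
  about density and the complement.  Connectedness: shifting all weight to the first term and then
  rotating each of its factors to the first basis vector joins every point to one fixed pure
  product state.

  For the null-set statement, a unit vector only matters up to a phase, so dividing it by an entry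
  of maximal modulus leaves 2(n_j - 1) real coordinates in [-1, 1].  This covers the set by finitely
  many Lipschitz images of cubes of dimension (k - 1) + k * sum_j 2(n_j - 1), and the bound on k says
  precisely that this is less than N^2 - 1.  A Lipschitz image of a cube of lower dimension is null:
  the images of the boxes of a grid of mesh 1/K have total measure O(1/K).
*)
theory Submission
  imports Defs
begin

section \<open>Lipschitz images of low-dimensional cubes\<close>

abbreviation cube :: "'a set \<Rightarrow> ('a \<Rightarrow> real) set" where
  "cube P \<equiv> PiE P (\<lambda>_. {-1..1})"

definition l1_dist :: "'a set \<Rightarrow> ('a \<Rightarrow> real) \<Rightarrow> ('a \<Rightarrow> real) \<Rightarrow> real" where
  "l1_dist P x y = (\<Sum>j\<in>P. \<bar>x j - y j\<bar>)"

lemma l1_dist_nonneg: "0 \<le> l1_dist P x y"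
  unfolding l1_dist_def by (intro sum_nonneg) auto

definition grid :: "nat \<Rightarrow> real set" where
  "grid K = (\<lambda>a. -1 + real a / real K) ` {..2*K}"

lemma finite_grid: "finite (grid K)"
  unfolding grid_def by auto

lemma card_grid_le: "card (grid K) \<le> 2 * K + 1"
  unfolding grid_def by (rule order.trans[OF card_image_le]) auto

lemma grid_subset: "K > 0 \<Longrightarrow> grid K \<subseteq> {-1..1}"
  unfolding grid_def by (auto simp: field_simps)

lemma grid_approx:
  assumes "K > 0" "t \<in> {-1..1}"
  shows "\<exists>c\<in>grid K. \<bar>t - c\<bar> \<le> 1 / real K"
proof -
  define a where "a = nat \<lfloor>(t + 1) * real K\<rfloor>"
  have "0 \<le> (t + 1) * real K" "(t + 1) * real K \<le> real (2 * K)"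
    using assms by auto
  then have a_le: "a \<le> 2 * K" and a_bounds: "real a \<le> (t + 1) * real K" "(t + 1) * real K < real a + 1"
    unfolding a_def by (auto simp: le_nat_iff floor_le_iff) linarith+
  have "\<bar>t - (-1 + real a / real K)\<bar> = ((t + 1) * real K - real a) / real K"
    using assms(1) a_bounds by (simp add: field_simps)
  also have "\<dots> \<le> 1 / real K"
    using a_bounds by (intro divide_right_mono) auto
  finally show ?thesis
    using a_le unfolding grid_def by auto
qed

lemma grid_cube_approx:
  assumes "finite P" "K > 0" "x \<in> cube P"
  shows "\<exists>c\<in>PiE P (\<lambda>_. grid K). l1_dist P x c \<le> real (card P) / real K"
proof -
  have "\<forall>j\<in>P. \<exists>c\<in>grid K. \<bar>x j - c\<bar> \<le> 1 / real K"
    using grid_approx[OF assms(2)] assms(3) by (auto simp: PiE_iff)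
  then obtain c' where c': "\<And>j. j \<in> P \<Longrightarrow> c' j \<in> grid K \<and> \<bar>x j - c' j\<bar> \<le> 1 / real K"
    by metis
  have "l1_dist P x (restrict c' P) \<le> (\<Sum>j\<in>P. 1 / real K)"
    unfolding l1_dist_def using c' by (intro sum_mono) auto
  then show ?thesis
    using c' by (intro bexI[of _ "restrict c' P"]) auto
qed

lemma cover_measure_le:
  fixes K :: real
  assumes "K \<ge> 1" "m < d" "G \<le> (2 * K + 1) ^ m" "0 \<le> G" "0 \<le> A"
  shows "G * (A / K) ^ d \<le> 3 ^ m * A ^ d / K"
proof -
  have "G \<le> (3 * K) ^ m"
    using assms(1,3) power_mono[of "2 * K + 1" "3 * K" m] by linarith
  then have "G * (A / K) ^ d \<le> (3 * K) ^ m * (A ^ d / K ^ d)"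
    using assms by (intro mult_mono) (auto simp: power_divide)
  also have "\<dots> = 3 ^ m * A ^ d / K * (K ^ Suc m / K ^ d)"
    using assms(1) by (simp add: field_simps)
  also have "\<dots> \<le> 3 ^ m * A ^ d / K"
  proof (intro mult_left_le)
    have "K ^ Suc m \<le> K ^ d"
      using assms(1,2) by (intro power_increasing) auto
    then show "K ^ Suc m / K ^ d \<le> 1"
      using assms(1) by simp
  qed (use assms in auto)
  finally show ?thesis .
qed

definition centered_box :: "nat \<Rightarrow> (nat \<Rightarrow> real) \<Rightarrow> real \<Rightarrow> (nat \<Rightarrow> real) set" where
  "centered_box d a r = PiE {..<d} (\<lambda>i. {a i - r .. a i + r})"

lemma centered_box_sets: "centered_box d a r \<in> sets (PiM {..<d} (\<lambda>_. lborel))"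
  unfolding centered_box_def by (intro sets_PiM_I_finite) auto

lemma emeasure_centered_box:
  assumes "r \<ge> 0"
  shows "emeasure (PiM {..<d} (\<lambda>_. lborel)) (centered_box d a r) = ennreal ((2 * r) ^ d)"
proof -
  interpret product_sigma_finite "\<lambda>_. lborel :: real measure"
    by standard
  have "emeasure (PiM {..<d} (\<lambda>_. lborel)) (centered_box d a r) = (\<Prod>i<d. emeasure lborel {a i - r .. a i + r})"
    unfolding centered_box_def by (intro emeasure_PiM) auto
  then show ?thesis
    using assms by (simp add: ennreal_power)
qed

lemma card_grid_cube_le:
  assumes "finite P"
  shows "real (card (PiE P (\<lambda>_. grid K))) \<le> (2 * real K + 1) ^ card P"
proof -
  have "real (card (PiE P (\<lambda>_. grid K))) = real (card (grid K)) ^ card P"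
    using assms by (simp add: card_PiE)
  also have "\<dots> \<le> (2 * real K + 1) ^ card P"
    using card_grid_le[of K] by (intro power_mono) (auto simp flip: of_nat_le_iff)
  finally show ?thesis .
qed

lemma lipschitz_image_cube_subset_boxes:
  fixes g :: "('a \<Rightarrow> real) \<Rightarrow> nat \<Rightarrow> real" and L :: real
  assumes "finite P" "K > 0" "L \<ge> 0"
    and lip: "\<And>x y i. x \<in> cube P \<Longrightarrow> y \<in> cube P \<Longrightarrow> i < d
               \<Longrightarrow> \<bar>g x i - g y i\<bar> \<le> L * l1_dist P x y"
    and ext: "\<And>x. x \<in> cube P \<Longrightarrow> g x \<in> PiE {..<d} (\<lambda>_. UNIV)"
  shows "g ` cube P \<subseteq> (\<Union>c\<in>PiE P (\<lambda>_. grid K). centered_box d (g c) (L * real (card P) / real K))"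
proof
  fix z assume "z \<in> g ` cube P"
  then obtain x where x: "x \<in> cube P" "z = g x"
    by auto
  obtain c where c: "c \<in> PiE P (\<lambda>_. grid K)" "l1_dist P x c \<le> real (card P) / real K"
    using grid_cube_approx[OF assms(1,2) x(1)] by blast
  have "c \<in> cube P"
    using c(1) grid_subset[OF assms(2)] by (auto simp: PiE_iff)
  have "g x i \<in> {g c i - L * real (card P) / real K .. g c i + L * real (card P) / real K}" if "i < d" for i
  proof -
    have "\<bar>g x i - g c i\<bar> \<le> L * l1_dist P x c"
      using lip x(1) \<open>c \<in> cube P\<close> that by blast
    also have "\<dots> \<le> L * real (card P) / real K"
      using mult_left_mono[OF c(2) assms(3)] by simp
    finally show ?thesis
      by (simp add: abs_le_iff)
  qed
  then have "g x \<in> centered_box d (g c) (L * real (card P) / real K)"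
    using ext[OF x(1)] unfolding centered_box_def by (auto simp: PiE_iff)
  then show "z \<in> (\<Union>c\<in>PiE P (\<lambda>_. grid K). centered_box d (g c) (L * real (card P) / real K))"
    using c(1) x(2) by blast
qed

lemma lipschitz_image_cube_small_cover:
  fixes g :: "('a \<Rightarrow> real) \<Rightarrow> nat \<Rightarrow> real"
  assumes "finite P" "card P < d" "L \<ge> 0" "K > 0"
    and "\<And>x y i. x \<in> cube P \<Longrightarrow> y \<in> cube P \<Longrightarrow> i < d
               \<Longrightarrow> \<bar>g x i - g y i\<bar> \<le> L * l1_dist P x y"
    and "\<And>x. x \<in> cube P \<Longrightarrow> g x \<in> PiE {..<d} (\<lambda>_. UNIV)"
  defines "M \<equiv> PiM {..<d} (\<lambda>_. lborel :: real measure)"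
  shows "\<exists>U \<in> sets M. g ` cube P \<subseteq> U \<and>
           emeasure M U \<le> ennreal (3 ^ card P * (2 * L * card P) ^ d / real K)"
proof -
  define m where "m = card P"
  define r where "r = L * real m / real K"
  define G where "G = PiE P (\<lambda>_. grid K)"
  define U where "U = (\<Union>c\<in>G. centered_box d (g c) r)"
  have "r \<ge> 0" "finite G"
    unfolding r_def G_def using assms(1,3) finite_grid by (auto intro: finite_PiE)
  have "U \<in> sets M"
    unfolding U_def M_def using \<open>finite G\<close> centered_box_sets by (intro sets.finite_UN) auto
  have "g ` cube P \<subseteq> U"
    unfolding U_def r_def m_def G_def by (rule lipschitz_image_cube_subset_boxes[OF assms(1,4,3,5,6)])
  have "emeasure M U \<le> (\<Sum>c\<in>G. emeasure M (centered_box d (g c) r))"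
    unfolding U_def M_def using \<open>finite G\<close> centered_box_sets by (intro emeasure_subadditive_finite) auto
  also have "\<dots> = ennreal (real (card G) * (2 * r) ^ d)"
    using \<open>r \<ge> 0\<close> by (simp add: M_def emeasure_centered_box ennreal_of_nat_eq_real_of_nat ennreal_mult)
  also have "\<dots> \<le> ennreal (3 ^ m * (2 * L * real m) ^ d / real K)"
  proof (rule ennreal_leI)
    have "real (card G) * (2 * L * real m / real K) ^ d \<le> 3 ^ m * (2 * L * real m) ^ d / real K"
      using assms(1-4) card_grid_cube_le unfolding m_def G_def by (intro cover_measure_le) auto
    then show "real (card G) * (2 * r) ^ d \<le> 3 ^ m * (2 * L * real m) ^ d / real K"
      unfolding r_def by (simp add: mult.assoc)
  qed
  finally show ?thesis
    using \<open>U \<in> sets M\<close> \<open>g ` cube P \<subseteq> U\<close> unfolding m_def by blast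
qed

lemma lipschitz_image_cube_null:
  fixes g :: "('a \<Rightarrow> real) \<Rightarrow> nat \<Rightarrow> real"
  assumes "finite P" "card P < d" "L \<ge> 0"
    and "\<And>x y i. x \<in> cube P \<Longrightarrow> y \<in> cube P \<Longrightarrow> i < d
               \<Longrightarrow> \<bar>g x i - g y i\<bar> \<le> L * l1_dist P x y"
    and "\<And>x. x \<in> cube P \<Longrightarrow> g x \<in> PiE {..<d} (\<lambda>_. UNIV)"
  shows "g ` cube P \<in> null_sets (completion (PiM {..<d} (\<lambda>_. lborel)))"
proof -
  define M where "M = PiM {..<d} (\<lambda>_. lborel :: real measure)"
  define C where "C = 3 ^ card P * (2 * L * card P) ^ d"
  have "\<forall>K. \<exists>U\<in>sets M. g ` cube P \<subseteq> U \<and> emeasure M U \<le> ennreal (C / real (Suc K))"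
    using lipschitz_image_cube_small_cover[OF assms(1-3) zero_less_Suc assms(4,5)]
    unfolding M_def C_def by blast
  then obtain U where U: "\<And>K. U K \<in> sets M" "\<And>K. g ` cube P \<subseteq> U K"
    "\<And>K. emeasure M (U K) \<le> ennreal (C / real (Suc K))"
    by metis
  define V where "V = (\<Inter>K. U K)"
  have V: "V \<in> sets M" "g ` cube P \<subseteq> V"
    unfolding V_def using U by auto
  have "emeasure M V \<le> ennreal (C / real (Suc K))" for K
    using emeasure_mono[of V "U K" M] U V(1) unfolding V_def by (meson INT_lower UNIV_I order_trans)
  moreover have "(\<lambda>K. ennreal (C / real (Suc K))) \<longlonglongrightarrow> ennreal 0"
  proof (intro tendsto_ennrealI)
    show "(\<lambda>K. C / real (Suc K)) \<longlonglongrightarrow> 0"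
      using tendsto_mult[OF tendsto_const[of C] LIMSEQ_inverse_real_of_nat] by (simp add: field_simps)
  qed
  ultimately have "emeasure M V \<le> 0"
    by (intro LIMSEQ_le_const) auto
  then show ?thesis
    using V unfolding M_def null_sets_completion_iff2 by (auto intro!: exI[of _ V])
qed

section \<open>Bounded Lipschitz functions on a cube\<close>

lemma kron_entry_closed:
  fixes Q :: "('x \<Rightarrow> complex) \<Rightarrow> bool"
  assumes const: "\<And>c. Q (\<lambda>x. c)"
    and mult: "\<And>f g. Q f \<Longrightarrow> Q g \<Longrightarrow> Q (\<lambda>x. f x * g x)"
    and "\<And>x. length (As x) = length ns"
    and "\<And>l a b. l < length ns \<Longrightarrow> Q (\<lambda>x. (As x ! l) a b)"
  shows "Q (\<lambda>x. kron ns (As x) a b)"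
  using assms(3,4)
proof (induction ns arbitrary: As a b)
  case Nil
  show ?case
    using const by simp
next
  case (Cons n ns)
  define m where "m = prod_list ns"
  have As_eq: "As x = As x ! 0 # tl (As x)" for x
    using Cons.prems(1)[of x] by (cases "As x") auto
  have "Q (\<lambda>x. kron ns (tl (As x)) a' b')" for a' b'
    using Cons.prems by (intro Cons.IH) (auto simp: nth_tl)
  then have "Q (\<lambda>x. (As x ! 0) (a div m) (b div m) * kron ns (tl (As x)) (a mod m) (b mod m))"
    using Cons.prems(2)[of 0] by (intro mult) auto
  moreover have "kron (n # ns) (As x) a b = (if a < n * m \<and> b < n * m then
      (As x ! 0) (a div m) (b div m) * kron ns (tl (As x)) (a mod m) (b mod m) else 0)" for x
    unfolding m_def by (subst As_eq) (simp only: kron.simps Let_def)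
  ultimately show ?case
    using const by (cases "a < n * m \<and> b < n * m") simp_all
qed

text \<open>Boundedness is part of the notion so that it is closed under products.\<close>

definition bdd_lipschitz :: "'a set \<Rightarrow> (('a \<Rightarrow> real) \<Rightarrow> complex) \<Rightarrow> bool" where
  "bdd_lipschitz P f \<longleftrightarrow> (\<exists>B L. \<forall>x\<in>cube P. cmod (f x) \<le> B \<and>
      (\<forall>y\<in>cube P. cmod (f x - f y) \<le> L * l1_dist P x y))"

lemma bdd_lipschitzI:
  assumes "\<And>x. x \<in> cube P \<Longrightarrow> cmod (f x) \<le> B"
    and "\<And>x y. x \<in> cube P \<Longrightarrow> y \<in> cube P \<Longrightarrow> cmod (f x - f y) \<le> L * l1_dist P x y"
  shows "bdd_lipschitz P f"
  unfolding bdd_lipschitz_def using assms by blast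

lemma bdd_lipschitzE:
  assumes "bdd_lipschitz P f"
  obtains B L where "B \<ge> 0" "L \<ge> 0" "\<And>x. x \<in> cube P \<Longrightarrow> cmod (f x) \<le> B"
    "\<And>x y. x \<in> cube P \<Longrightarrow> y \<in> cube P \<Longrightarrow> cmod (f x - f y) \<le> L * l1_dist P x y"
proof -
  obtain B L where BL: "\<And>x. x \<in> cube P \<Longrightarrow> cmod (f x) \<le> B"
    "\<And>x y. x \<in> cube P \<Longrightarrow> y \<in> cube P \<Longrightarrow> cmod (f x - f y) \<le> L * l1_dist P x y"
    using assms unfolding bdd_lipschitz_def by blast
  show ?thesis
  proof (rule that[of "max B 0" "max L 0"])
    show "cmod (f x) \<le> max B 0" if "x \<in> cube P" for x
      using BL(1)[OF that] by linarith
    show "cmod (f x - f y) \<le> max L 0 * l1_dist P x y" if "x \<in> cube P" "y \<in> cube P" for x y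
      using BL(2)[OF that] mult_right_mono[of L "max L 0" "l1_dist P x y"] l1_dist_nonneg
      by fastforce
  qed auto
qed

lemma bdd_lipschitz_const: "bdd_lipschitz P (\<lambda>x. c)"
  by (rule bdd_lipschitzI[of _ _ "cmod c" 0]) auto

lemma bdd_lipschitz_coord:
  assumes "finite P" "j \<in> P"
  shows "bdd_lipschitz P (\<lambda>x. complex_of_real (x j))"
proof (rule bdd_lipschitzI[of _ _ 1 1])
  show "cmod (complex_of_real (x j)) \<le> 1" if "x \<in> cube P" for x
    using that assms(2) by (auto simp: PiE_iff)
  have "\<bar>x j - y j\<bar> \<le> l1_dist P x y" for x y :: "'a \<Rightarrow> real"
    unfolding l1_dist_def using assms by (intro member_le_sum) auto
  then show "cmod (complex_of_real (x j) - complex_of_real (y j)) \<le> 1 * l1_dist P x y" for x y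
    by (simp flip: of_real_diff)
qed

lemma bdd_lipschitz_add:
  assumes "bdd_lipschitz P f" "bdd_lipschitz P g"
  shows "bdd_lipschitz P (\<lambda>x. f x + g x)"
proof -
  obtain B1 L1 where f: "\<And>x. x \<in> cube P \<Longrightarrow> cmod (f x) \<le> B1"
    "\<And>x y. x \<in> cube P \<Longrightarrow> y \<in> cube P \<Longrightarrow> cmod (f x - f y) \<le> L1 * l1_dist P x y"
    using bdd_lipschitzE[OF assms(1)] by metis
  obtain B2 L2 where g: "\<And>x. x \<in> cube P \<Longrightarrow> cmod (g x) \<le> B2"
    "\<And>x y. x \<in> cube P \<Longrightarrow> y \<in> cube P \<Longrightarrow> cmod (g x - g y) \<le> L2 * l1_dist P x y"
    using bdd_lipschitzE[OF assms(2)] by metis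
  show ?thesis
  proof (rule bdd_lipschitzI[of _ _ "B1 + B2" "L1 + L2"])
    show "cmod (f x + g x) \<le> B1 + B2" if "x \<in> cube P" for x
      using f(1)[OF that] g(1)[OF that] norm_triangle_ineq[of "f x" "g x"] by linarith
    show "cmod (f x + g x - (f y + g y)) \<le> (L1 + L2) * l1_dist P x y"
      if "x \<in> cube P" "y \<in> cube P" for x y
      using f(2)[OF that] g(2)[OF that] norm_triangle_ineq[of "f x - f y" "g x - g y"]
      by (simp add: distrib_right add_diff_add)
  qed
qed

lemma bdd_lipschitz_mult:
  assumes "bdd_lipschitz P f" "bdd_lipschitz P g"
  shows "bdd_lipschitz P (\<lambda>x. f x * g x)"
proof -
  obtain B1 L1 where f: "B1 \<ge> 0" "L1 \<ge> 0" "\<And>x. x \<in> cube P \<Longrightarrow> cmod (f x) \<le> B1"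
    "\<And>x y. x \<in> cube P \<Longrightarrow> y \<in> cube P \<Longrightarrow> cmod (f x - f y) \<le> L1 * l1_dist P x y"
    using bdd_lipschitzE[OF assms(1)] by metis
  obtain B2 L2 where g: "B2 \<ge> 0" "L2 \<ge> 0" "\<And>x. x \<in> cube P \<Longrightarrow> cmod (g x) \<le> B2"
    "\<And>x y. x \<in> cube P \<Longrightarrow> y \<in> cube P \<Longrightarrow> cmod (g x - g y) \<le> L2 * l1_dist P x y"
    using bdd_lipschitzE[OF assms(2)] by metis
  show ?thesis
  proof (rule bdd_lipschitzI[of _ _ "B1 * B2" "B1 * L2 + B2 * L1"])
    show "cmod (f x * g x) \<le> B1 * B2" if "x \<in> cube P" for x
      unfolding norm_mult using f g that by (intro mult_mono) auto
    fix x y assume xy: "x \<in> cube P" "y \<in> cube P"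
    have "f x * g x - f y * g y = f x * (g x - g y) + g y * (f x - f y)"
      by (simp add: algebra_simps)
    then have "cmod (f x * g x - f y * g y) \<le> cmod (f x) * cmod (g x - g y) + cmod (g y) * cmod (f x - f y)"
      by (metis norm_mult norm_triangle_ineq)
    also have "\<dots> \<le> B1 * (L2 * l1_dist P x y) + B2 * (L1 * l1_dist P x y)"
      using f g xy by (intro add_mono mult_mono) auto
    finally show "cmod (f x * g x - f y * g y) \<le> (B1 * L2 + B2 * L1) * l1_dist P x y"
      by (simp add: algebra_simps)
  qed
qed

lemma bdd_lipschitz_diff:
  assumes "bdd_lipschitz P f" "bdd_lipschitz P g"
  shows "bdd_lipschitz P (\<lambda>x. f x - g x)"
  using bdd_lipschitz_add[OF assms(1) bdd_lipschitz_mult[OF bdd_lipschitz_const[of P "-1"] assms(2)]]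
  by simp

lemma bdd_lipschitz_sum:
  assumes "\<And>i. i \<in> I \<Longrightarrow> bdd_lipschitz P (f i)"
  shows "bdd_lipschitz P (\<lambda>x. \<Sum>i\<in>I. f i x)"
  using assms
  by (induction I rule: infinite_finite_induct) (simp_all add: bdd_lipschitz_add bdd_lipschitz_const)

lemma bdd_lipschitz_cnj:
  assumes "bdd_lipschitz P f"
  shows "bdd_lipschitz P (\<lambda>x. cnj (f x))"
proof -
  obtain B L where f: "\<And>x. x \<in> cube P \<Longrightarrow> cmod (f x) \<le> B"
    "\<And>x y. x \<in> cube P \<Longrightarrow> y \<in> cube P \<Longrightarrow> cmod (f x - f y) \<le> L * l1_dist P x y"
    using bdd_lipschitzE[OF assms] by metis
  show ?thesis
    by (rule bdd_lipschitzI[of _ _ B L]) (simp_all flip: complex_cnj_diff add: f)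
qed

lemma bdd_lipschitz_inverse:
  assumes "bdd_lipschitz P f" "\<And>x. x \<in> cube P \<Longrightarrow> cmod (f x) \<ge> 1"
  shows "bdd_lipschitz P (\<lambda>x. inverse (f x))"
proof -
  obtain L where L: "\<And>x y. x \<in> cube P \<Longrightarrow> y \<in> cube P \<Longrightarrow> cmod (f x - f y) \<le> L * l1_dist P x y"
    using bdd_lipschitzE[OF assms(1)] by metis
  show ?thesis
  proof (rule bdd_lipschitzI[of _ _ 1 L])
    show "cmod (inverse (f x)) \<le> 1" if "x \<in> cube P" for x
      using assms(2)[OF that] by (simp add: norm_inverse inverse_le_1_iff)
    fix x y assume xy: "x \<in> cube P" "y \<in> cube P"
    have ge1: "1 \<le> cmod (f x)" "1 \<le> cmod (f y)"
      using assms(2) xy by auto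
    then have "f x \<noteq> 0" "f y \<noteq> 0"
      by auto
    then have "inverse (f x) - inverse (f y) = (f y - f x) / (f x * f y)"
      by (simp add: field_simps)
    then have "cmod (inverse (f x) - inverse (f y)) = cmod (f x - f y) / (cmod (f x) * cmod (f y))"
      by (simp add: norm_divide norm_mult norm_minus_commute)
    also have "\<dots> \<le> cmod (f x - f y)"
      using ge1 mult_mono[OF ge1] by (simp add: divide_le_eq mult_le_cancel_left1
          order_trans[OF _ mult_right_mono])
    finally show "cmod (inverse (f x) - inverse (f y)) \<le> L * l1_dist P x y"
      using L[OF xy] by linarith
  qed
qed

lemma bdd_lipschitz_divide:
  assumes "bdd_lipschitz P f" "bdd_lipschitz P g" "\<And>x. x \<in> cube P \<Longrightarrow> cmod (g x) \<ge> 1"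
  shows "bdd_lipschitz P (\<lambda>x. f x / g x)"
  using bdd_lipschitz_mult[OF assms(1) bdd_lipschitz_inverse[OF assms(2,3)]]
  by (simp add: divide_inverse)

lemma bdd_lipschitz_kron:
  assumes "\<And>x. length (As x) = length ns"
    and "\<And>l a b. l < length ns \<Longrightarrow> bdd_lipschitz P (\<lambda>x. (As x ! l) a b)"
  shows "bdd_lipschitz P (\<lambda>x. kron ns (As x) a b)"
  using assms by (intro kron_entry_closed[where Q = "bdd_lipschitz P"] bdd_lipschitz_const bdd_lipschitz_mult)

lemma bdd_lipschitz_uniform:
  assumes "finite I" "\<And>i. i \<in> I \<Longrightarrow> bdd_lipschitz P (f i)"
  obtains L where "L \<ge> 0"
    "\<And>i x y. i \<in> I \<Longrightarrow> x \<in> cube P \<Longrightarrow> y \<in> cube P \<Longrightarrow> cmod (f i x - f i y) \<le> L * l1_dist P x y"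
proof -
  have "\<exists>L\<ge>0. \<forall>x\<in>cube P. \<forall>y\<in>cube P. cmod (f i x - f i y) \<le> L * l1_dist P x y"
    if "i \<in> I" for i
    by (rule bdd_lipschitzE[OF assms(2)[OF that]]) blast
  then have "\<forall>i\<in>I. \<exists>L\<ge>0. \<forall>x\<in>cube P. \<forall>y\<in>cube P. cmod (f i x - f i y) \<le> L * l1_dist P x y"
    by blast
  then obtain Li where Li: "\<And>i. i \<in> I \<Longrightarrow> Li i \<ge> 0"
    "\<And>i x y. i \<in> I \<Longrightarrow> x \<in> cube P \<Longrightarrow> y \<in> cube P \<Longrightarrow> cmod (f i x - f i y) \<le> Li i * l1_dist P x y"
    by metis
  show ?thesis
  proof (rule that[of "\<Sum>i\<in>I. Li i"])
    show "0 \<le> (\<Sum>i\<in>I. Li i)"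
      using Li(1) by (simp add: sum_nonneg)
    fix i x y assume ixy: "i \<in> I" "x \<in> cube P" "y \<in> cube P"
    have "Li i \<le> (\<Sum>i\<in>I. Li i)"
      using assms(1) Li(1) ixy(1) by (intro member_le_sum) auto
    then show "cmod (f i x - f i y) \<le> (\<Sum>i\<in>I. Li i) * l1_dist P x y"
      using Li(2)[OF ixy] l1_dist_nonneg[of P x y] by (meson mult_right_mono order_trans)
  qed
qed

section \<open>Mixtures of pure product states as a continuous image\<close>

definition outer :: "nat \<Rightarrow> (nat \<Rightarrow> complex) \<Rightarrow> cmat" where
  "outer n v = (\<lambda>a b. if a < n \<and> b < n then v a * cnj (v b) else 0)"

definition kron_outer :: "nat list \<Rightarrow> (nat \<Rightarrow> nat \<Rightarrow> complex) \<Rightarrow> cmat" where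
  "kron_outer ns W = kron ns (map (\<lambda>j. outer (ns ! j) (W j)) [0..<length ns])"

lemma sum_mult_cnj: "(\<Sum>r<n. v r * cnj (v r)) = complex_of_real (\<Sum>r<n. (cmod (v r))\<^sup>2)"
  by (simp only: of_real_sum complex_norm_square)

lemma outer_cong: "(\<And>r. r < n \<Longrightarrow> v r = v' r) \<Longrightarrow> outer n v = outer n v'"
  unfolding outer_def by (intro ext) auto

lemma kron_outer_cong:
  "(\<And>j r. j < length ns \<Longrightarrow> r < ns ! j \<Longrightarrow> W j r = W' j r) \<Longrightarrow> kron_outer ns W = kron_outer ns W'"
  unfolding kron_outer_def by (intro arg_cong[where f = "kron ns"] map_cong outer_cong) auto

lemma outer_phase:
  assumes "cmod u = 1"
  shows "outer n (\<lambda>r. u * v r) = outer n v"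
proof -
  have "u * cnj u = 1"
    using assms complex_norm_square[of u] by simp
  moreover have "u * v a * cnj (u * v b) = (u * cnj u) * (v a * cnj (v b))" for a b
    by (simp add: mult_ac)
  ultimately have uv: "u * v a * cnj (u * v b) = v a * cnj (v b)" for a b
    by simp
  show ?thesis
    unfolding outer_def by (intro ext) (simp only: uv)
qed

lemma pure_state_outer:
  assumes "(\<Sum>r<n. (cmod (v r))\<^sup>2) = 1"
  shows "pure_state n (outer n v)"
proof -
  have psd: "0 \<le> Re (\<Sum>a<n. \<Sum>b<n. cnj (x a) * outer n v a b * x b)" for x
  proof -
    define z where "z = (\<Sum>a<n. cnj (x a) * v a)"
    have "(\<Sum>a<n. \<Sum>b<n. cnj (x a) * outer n v a b * x b) = (\<Sum>a<n. cnj (x a) * v a) * (\<Sum>b<n. cnj (v b) * x b)"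
      unfolding outer_def sum_product by (intro sum.cong refl) (simp add: algebra_simps)
    also have "\<dots> = z * cnj z"
      unfolding z_def cnj_sum by (simp add: mult.commute)
    finally show ?thesis
      by (simp add: complex_norm_square[symmetric])
  qed
  have "(\<Sum>a<n. outer n v a a) = 1"
    unfolding outer_def using assms by (simp add: sum_mult_cnj)
  then show ?thesis
    unfolding pure_state_def density_matrix_def supported_in_def
    using psd assms by (auto simp: outer_def)
qed

lemma pure_product_state_kron_outer:
  assumes "\<And>j. j < length ns \<Longrightarrow> (\<Sum>r<ns ! j. (cmod (W j r))\<^sup>2) = 1"
  shows "pure_product_state ns (kron_outer ns W)"
  unfolding pure_product_state_def kron_outer_def
  using assms by (intro exI[of _ "map (\<lambda>j. outer (ns ! j) (W j)) [0..<length ns]"]) (auto intro: pure_state_outer)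

lemma pure_product_state_obtain:
  assumes "pure_product_state ns B"
  obtains W where "\<And>j. j < length ns \<Longrightarrow> (\<Sum>r<ns ! j. (cmod (W j r))\<^sup>2) = 1" "B = kron_outer ns W"
proof -
  obtain As where As: "length As = length ns" "\<And>j. j < length ns \<Longrightarrow> pure_state (ns ! j) (As ! j)"
    "B = kron ns As"
    using assms unfolding pure_product_state_def by blast
  have "\<forall>j. \<exists>v. j < length ns \<longrightarrow> (\<Sum>r<ns ! j. (cmod (v r))\<^sup>2) = 1 \<and> As ! j = outer (ns ! j) v"
    using As(2) unfolding pure_state_def outer_def by blast
  then obtain W where W: "\<And>j. j < length ns \<Longrightarrow> (\<Sum>r<ns ! j. (cmod (W j r))\<^sup>2) = 1 \<and> As ! j = outer (ns ! j) (W j)"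
    by metis
  have "As = map (\<lambda>j. outer (ns ! j) (W j)) [0..<length ns]"
    using As(1) W by (intro nth_equalityI) auto
  then show ?thesis
    using W As(3) by (intro that) (auto simp: kron_outer_def)
qed

text \<open>Entries of \<open>c\<close> and \<open>V\<close> outside the index ranges are required to vanish, which makes
  the parameter set compact in the product topology.\<close>

definition mixture_params :: "nat \<Rightarrow> nat list \<Rightarrow> ((nat \<Rightarrow> real) \<times> (nat \<Rightarrow> nat \<Rightarrow> nat \<Rightarrow> complex)) set" where
  "mixture_params k ns = {(c, V). (\<forall>l. 0 \<le> c l) \<and> (\<forall>l\<ge>k. c l = 0) \<and> (\<Sum>l<k. c l) = 1 \<and>
      (\<forall>l j r. \<not> (l < k \<and> j < length ns \<and> r < ns ! j) \<longrightarrow> V l j r = 0) \<and>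
      (\<forall>l<k. \<forall>j<length ns. (\<Sum>r<ns ! j. (cmod (V l j r))\<^sup>2) = 1)}"

definition mixture :: "nat \<Rightarrow> nat list \<Rightarrow> (nat \<Rightarrow> real) \<times> (nat \<Rightarrow> nat \<Rightarrow> nat \<Rightarrow> complex) \<Rightarrow> cmat" where
  "mixture k ns cV = (\<lambda>a b. \<Sum>l<k. complex_of_real (fst cV l) * kron_outer ns (snd cV l) a b)"

lemma Sigma_pure_eq: "Sigma_pure k ns = {A. \<exists>m\<le>k. convex_comb_of (pure_product_state ns) m A}"
proof -
  have "pure_product_state ns A \<Longrightarrow> product_dm ns A" for A
    unfolding pure_product_state_def product_dm_def pure_state_def by blast
  then have "convex_comb_of (pure_product_state ns) m A \<Longrightarrow> convex_comb_of (product_dm ns) m A" for m A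
    unfolding convex_comb_of_def by blast
  then show ?thesis
    unfolding Sigma_pure_def Sigma_sep_def by blast
qed

lemma mixture_image_subset: "mixture k ns ` mixture_params k ns \<subseteq> Sigma_pure k ns"
proof
  fix A assume "A \<in> mixture k ns ` mixture_params k ns"
  then obtain c V where cV: "(c, V) \<in> mixture_params k ns" "A = mixture k ns (c, V)"
    by auto
  then have "pure_product_state ns (kron_outer ns (V l))" if "l < k" for l
    using that unfolding mixture_params_def by (intro pure_product_state_kron_outer) auto
  then have "convex_comb_of (pure_product_state ns) k A"
    using cV unfolding convex_comb_of_def mixture_def mixture_params_def
    by (intro exI[of _ c] exI[of _ "\<lambda>l. kron_outer ns (V l)"]) auto
  then show "A \<in> Sigma_pure k ns"
    unfolding Sigma_pure_eq by blast
qed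

lemma Sigma_pure_subset_mixture_image:
  assumes "k > 0"
  shows "Sigma_pure k ns \<subseteq> mixture k ns ` mixture_params k ns"
proof
  fix A assume "A \<in> Sigma_pure k ns"
  then obtain m c B where m: "m \<le> k" and cB: "\<And>l. l < m \<Longrightarrow> 0 \<le> c l \<and> pure_product_state ns (B l)"
    and c_sum: "(\<Sum>l<m. c l) = 1" and A: "A = (\<lambda>a b. \<Sum>l<m. complex_of_real (c l) * B l a b)"
    unfolding Sigma_pure_eq convex_comb_of_def by blast
  have "m > 0"
    using c_sum by (cases m) auto
  have "\<forall>l. \<exists>W. l < m \<longrightarrow> (\<forall>j<length ns. (\<Sum>r<ns ! j. (cmod (W j r))\<^sup>2) = 1) \<and> B l = kron_outer ns W"
    using cB pure_product_state_obtain by metis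
  then obtain W where W: "\<And>l. l < m \<Longrightarrow> (\<forall>j<length ns. (\<Sum>r<ns ! j. (cmod (W l j r))\<^sup>2) = 1) \<and>
      B l = kron_outer ns (W l)"
    by metis
  define c' where "c' l = (if l < m then c l else 0)" for l
  define V where "V l j r = (if l < k \<and> j < length ns \<and> r < ns ! j then W (if l < m then l else 0) j r else 0)"
    for l j r
  have "(\<Sum>l<k. c' l) = (\<Sum>l<m. c l)"
    using m by (intro sum.mono_neutral_cong_right) (auto simp: c'_def)
  moreover have "(\<Sum>r<ns ! j. (cmod (V l j r))\<^sup>2) = 1" if "l < k" "j < length ns" for l j
    using W[of "if l < m then l else 0"] \<open>m > 0\<close> that unfolding V_def by auto
  ultimately have params: "(c', V) \<in> mixture_params k ns"
    using cB c_sum m unfolding mixture_params_def c'_def V_def by auto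
  have "kron_outer ns (V l) = B l" if "l < m" for l
    using W[OF that] that m by (auto simp: V_def intro: kron_outer_cong)
  then have "mixture k ns (c', V) a b = (\<Sum>l<m. complex_of_real (c l) * B l a b)" for a b
    unfolding mixture_def using m by (intro sum.mono_neutral_cong_right) (auto simp: c'_def)
  then have "A = mixture k ns (c', V)"
    unfolding A by (simp add: fun_eq_iff)
  then show "A \<in> mixture k ns ` mixture_params k ns"
    using params by blast
qed

lemma Sigma_pure_eq_mixture_image: "k > 0 \<Longrightarrow> Sigma_pure k ns = mixture k ns ` mixture_params k ns"
  using mixture_image_subset Sigma_pure_subset_mixture_image by blast

lemma continuous_on_weight: "continuous_on S (\<lambda>z. fst z l)"
  by (rule continuous_on_product_then_coordinatewise[OF continuous_on_fst[OF continuous_on_id]])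

lemma continuous_on_vector_entry: "continuous_on S (\<lambda>z. snd z l j r)"
proof -
  have "continuous_on S (\<lambda>z. snd z l)"
    by (rule continuous_on_product_then_coordinatewise[OF continuous_on_snd[OF continuous_on_id]])
  then have "continuous_on S (\<lambda>z. snd z l j)"
    by (rule continuous_on_product_then_coordinatewise)
  then show ?thesis
    by (rule continuous_on_product_then_coordinatewise)
qed

lemma continuous_on_outer_entry: "continuous_on S (\<lambda>z. outer n (snd z l j) a b)"
proof (cases "a < n \<and> b < n")
  case True
  then show ?thesis
    unfolding outer_def by (simp add: continuous_on_mult continuous_on_cnj continuous_on_vector_entry)
next
  case False
  then show ?thesis
    unfolding outer_def if_not_P[OF False] by simp
qed

lemma continuous_on_mixture: "continuous_on S (mixture k ns)"
proof (intro continuous_on_coordinatewise_then_product)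
  have "continuous_on S (\<lambda>z. (map (\<lambda>j. outer (ns ! j) (snd z l j)) [0..<length ns] ! j) a b)"
    if "j < length ns" for l j a b
    using that by (simp add: continuous_on_outer_entry)
  then show "continuous_on S (\<lambda>z. mixture k ns z a b)" for a b
    unfolding mixture_def kron_outer_def
    by (intro continuous_on_sum continuous_on_mult continuous_on_of_real continuous_on_weight
        kron_entry_closed[where Q = "continuous_on S"] continuous_on_const) auto
qed

lemma compact_PiE_UNIV:
  fixes K :: "'i \<Rightarrow> 'b::topological_space set"
  assumes "\<And>i. compact (K i)"
  shows "compact (PiE UNIV K)"
proof -
  have "compactin (product_topology (\<lambda>_. euclidean) UNIV) (PiE UNIV K)"
    using assms by (simp add: compactin_PiE)
  then show ?thesis
    by (simp add: euclidean_product_topology)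
qed

lemma closed_mixture_params: "closed (mixture_params k ns)"
proof -
  have "mixture_params k ns = {z. (\<forall>l. 0 \<le> fst z l) \<and> (\<forall>l. k \<le> l \<longrightarrow> fst z l = 0) \<and> (\<Sum>l<k. fst z l) = 1 \<and>
      (\<forall>l j r. \<not> (l < k \<and> j < length ns \<and> r < ns ! j) \<longrightarrow> snd z l j r = 0) \<and>
      (\<forall>l. l < k \<longrightarrow> (\<forall>j. j < length ns \<longrightarrow> (\<Sum>r<ns ! j. (cmod (snd z l j r))\<^sup>2) = 1))}"
    unfolding mixture_params_def by auto
  then show ?thesis
    by (simp only:) (intro closed_Collect_conj closed_Collect_all closed_Collect_imp open_Collect_const
        closed_Collect_le closed_Collect_eq continuous_on_const continuous_on_weight continuous_on_vector_entry
        continuous_on_sum continuous_on_power continuous_on_norm continuous_on_of_real)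
qed

lemma mixture_params_bounded:
  assumes "(c, V) \<in> mixture_params k ns"
  shows "c l \<in> {0..1}" "cmod (V l j r) \<le> 1"
proof -
  show "c l \<in> {0..1}"
  proof (cases "l < k")
    case True
    then have "c l \<le> (\<Sum>l<k. c l)"
      using assms by (intro member_le_sum) (auto simp: mixture_params_def)
    then show ?thesis
      using assms by (simp add: mixture_params_def)
  qed (use assms in \<open>simp add: mixture_params_def\<close>)
  show "cmod (V l j r) \<le> 1"
  proof (cases "l < k \<and> j < length ns \<and> r < ns ! j")
    case True
    then have "(cmod (V l j r))\<^sup>2 \<le> (\<Sum>r<ns ! j. (cmod (V l j r))\<^sup>2)"
      by (intro member_le_sum) auto
    then show ?thesis
      using assms True by (simp add: mixture_params_def power_le_one_iff abs_square_le_1)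
  qed (use assms in \<open>simp add: mixture_params_def\<close>)
qed

lemma compact_mixture_params: "compact (mixture_params k ns)"
proof -
  define B :: "((nat \<Rightarrow> real) \<times> (nat \<Rightarrow> nat \<Rightarrow> nat \<Rightarrow> complex)) set"
    where "B = PiE UNIV (\<lambda>_. {0..1}) \<times> PiE UNIV (\<lambda>_. PiE UNIV (\<lambda>_. PiE UNIV (\<lambda>_. cball 0 1)))"
  have "compact (mixture_params k ns \<inter> B)"
    unfolding B_def by (intro closed_Int_compact closed_mixture_params compact_Times compact_PiE_UNIV) auto
  moreover have "(c, V) \<in> B" if "(c, V) \<in> mixture_params k ns" for c V
    unfolding B_def using mixture_params_bounded[OF that] by (simp add: PiE_UNIV_domain)
  then have "mixture_params k ns \<subseteq> B"
    by auto
  ultimately show ?thesis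
    by (simp only: Int_absorb2)
qed

lemma compact_Sigma_pure: "k > 0 \<Longrightarrow> compact (Sigma_pure k ns)"
  by (simp add: Sigma_pure_eq_mixture_image compact_continuous_image[OF continuous_on_mixture compact_mixture_params])

section \<open>Connectedness\<close>

definition first_weight :: "nat \<Rightarrow> real" where
  "first_weight l = (if l = 0 then 1 else 0)"

definition basis0 :: "nat \<Rightarrow> complex" where
  "basis0 r = (if r = 0 then 1 else 0)"

definition base_state :: "nat list \<Rightarrow> cmat" where
  "base_state ns = kron_outer ns (\<lambda>_. basis0)"

definition phase :: "complex \<Rightarrow> complex" where
  "phase z = (if z = 0 then 1 else sgn z)"

definition towards_basis0 :: "(nat \<Rightarrow> complex) \<Rightarrow> real \<Rightarrow> nat \<Rightarrow> complex" where
  "towards_basis0 v t r = of_real (1 - t) * v r + of_real t * phase (v 0) * basis0 r"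

definition normalized :: "nat \<Rightarrow> (nat \<Rightarrow> complex) \<Rightarrow> nat \<Rightarrow> complex" where
  "normalized n w r = w r / of_real (sqrt (\<Sum>r<n. (cmod (w r))\<^sup>2))"

definition first_factor_path ::
    "nat list \<Rightarrow> (nat \<Rightarrow> nat \<Rightarrow> nat \<Rightarrow> complex) \<Rightarrow> real \<Rightarrow> nat \<Rightarrow> nat \<Rightarrow> nat \<Rightarrow> complex" where
  "first_factor_path ns V t l j =
     (if l = 0 \<and> j < length ns then normalized (ns ! j) (towards_basis0 (V 0 j) t) else V l j)"

lemma sum_first_weight: "k > 0 \<Longrightarrow> (\<Sum>l<k. first_weight l) = 1"
  by (simp add: first_weight_def)

lemma cmod_phase: "cmod (phase z) = 1"
  by (simp add: phase_def norm_sgn)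

lemma phase_mult_cmod: "phase z * complex_of_real (cmod z) = z"
  by (simp add: phase_def sgn_eq)

lemma sum_sq_cmod_normalized:
  assumes "0 < (\<Sum>r<n. (cmod (w r))\<^sup>2)"
  shows "(\<Sum>r<n. (cmod (normalized n w r))\<^sup>2) = 1"
proof -
  have "(\<Sum>r<n. (cmod (normalized n w r))\<^sup>2) = (\<Sum>r<n. (cmod (w r))\<^sup>2) / (\<Sum>r<n. (cmod (w r))\<^sup>2)"
    unfolding normalized_def sum_divide_distrib
    using assms by (intro sum.cong) (simp_all add: norm_divide power_divide)
  then show ?thesis
    using assms by simp
qed

lemma normalized_eq_self:
  assumes "(\<Sum>r<n. (cmod (w r))\<^sup>2) = 1"
  shows "normalized n w = w"
  using assms by (simp add: normalized_def fun_eq_iff)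

text \<open>Moving towards the phase of \<open>v 0\<close> (rather than towards \<open>basis0\<close> itself) keeps the
  \<open>0\<close>-th entry away from \<open>0\<close>, so the segment never passes through the zero vector.\<close>

lemma towards_basis0_nonzero:
  assumes "(\<Sum>r<n. (cmod (v r))\<^sup>2) = 1" "n > 0" "t \<in> {0..1}"
  shows "0 < (\<Sum>r<n. (cmod (towards_basis0 v t r))\<^sup>2)"
proof (cases "t = 0")
  case True
  then show ?thesis
    using assms(1) by (simp add: towards_basis0_def)
next
  case False
  have "towards_basis0 v t 0 = phase (v 0) * complex_of_real ((1 - t) * cmod (v 0) + t)"
    unfolding towards_basis0_def basis0_def
    by (subst (1) phase_mult_cmod[symmetric, of "v 0"]) (simp add: algebra_simps)
  then have "cmod (towards_basis0 v t 0) = \<bar>(1 - t) * cmod (v 0) + t\<bar>"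
    by (simp only: norm_mult cmod_phase norm_of_real mult_1)
  moreover have "(1 - t) * cmod (v 0) + t > 0"
    using assms(3) False by (simp add: add_nonneg_pos)
  ultimately have "0 < (cmod (towards_basis0 v t 0))\<^sup>2"
    by simp
  also have "\<dots> \<le> (\<Sum>r<n. (cmod (towards_basis0 v t r))\<^sup>2)"
    using assms(2) by (intro member_le_sum) auto
  finally show ?thesis .
qed

lemma weight_segment_in_mixture_params:
  assumes "(c, V) \<in> mixture_params k ns" "k > 0" "t \<in> {0..1}"
  shows "(\<lambda>l. (1 - t) * c l + t * first_weight l, V) \<in> mixture_params k ns"
proof -
  have "(\<Sum>l<k. (1 - t) * c l + t * first_weight l) = (1 - t) * (\<Sum>l<k. c l) + t * (\<Sum>l<k. first_weight l)"
    by (simp add: sum.distrib sum_distrib_left)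
  then show ?thesis
    using assms by (auto simp: mixture_params_def first_weight_def sum_first_weight)
qed

lemma first_factor_path_in_mixture_params:
  assumes "(c, V) \<in> mixture_params k ns" "k > 0" "\<forall>n\<in>set ns. n > 0" "t \<in> {0..1}"
  shows "(first_weight, first_factor_path ns V t) \<in> mixture_params k ns"
proof -
  have V: "\<And>l j r. \<not> (l < k \<and> j < length ns \<and> r < ns ! j) \<Longrightarrow> V l j r = 0"
    "\<And>l j. l < k \<Longrightarrow> j < length ns \<Longrightarrow> (\<Sum>r<ns ! j. (cmod (V l j r))\<^sup>2) = 1"
    using assms(1) unfolding mixture_params_def by auto
  have "first_factor_path ns V t l j r = 0" if "\<not> (l < k \<and> j < length ns \<and> r < ns ! j)" for l j r
  proof (cases "l = 0 \<and> j < length ns")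
    case True
    then have "ns ! j \<le> r" "0 < ns ! j"
      using that assms(2,3) by auto
    then show ?thesis
      using True V(1)[of 0 j r] unfolding first_factor_path_def normalized_def towards_basis0_def basis0_def
      by simp
  qed (use that V(1) in \<open>auto simp: first_factor_path_def\<close>)
  moreover have "(\<Sum>r<ns ! j. (cmod (first_factor_path ns V t l j r))\<^sup>2) = 1"
    if "l < k" "j < length ns" for l j
    using that V(2) towards_basis0_nonzero[OF V(2)[OF assms(2)] _ assms(4)] assms(3)
    by (auto simp: first_factor_path_def sum_sq_cmod_normalized)
  ultimately show ?thesis
    using assms(2) by (auto simp: mixture_params_def first_weight_def sum_first_weight)
qed

lemma first_factor_path_0:
  assumes "(c, V) \<in> mixture_params k ns" "k > 0"
  shows "first_factor_path ns V 0 = V"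
  using assms by (auto simp: fun_eq_iff first_factor_path_def towards_basis0_def mixture_params_def
      normalized_eq_self)

lemma mixture_first_weight:
  assumes "k > 0"
  shows "mixture k ns (first_weight, W) = kron_outer ns (W 0)"
proof (intro ext)
  fix a b
  have "mixture k ns (first_weight, W) a b =
      (\<Sum>l\<in>{0}. complex_of_real (first_weight l) * kron_outer ns (W l) a b)"
    unfolding mixture_def fst_conv snd_conv
    using assms by (intro sum.mono_neutral_right) (auto simp: first_weight_def)
  then show "mixture k ns (first_weight, W) a b = kron_outer ns (W 0) a b"
    by (simp add: first_weight_def)
qed

lemma sum_cmod_phase_basis0:
  assumes "n > 0"
  shows "(\<Sum>r<n. (cmod (phase z * basis0 r))\<^sup>2) = 1"
proof -
  have "(cmod (phase z * basis0 r))\<^sup>2 = (if r = 0 then 1 else 0)" for r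
    by (simp add: basis0_def norm_mult cmod_phase)
  then show ?thesis
    using assms by simp
qed

lemma mixture_first_factor_path_1:
  assumes "k > 0" "\<forall>n\<in>set ns. n > 0"
  shows "mixture k ns (first_weight, first_factor_path ns V 1) = base_state ns"
proof -
  have "outer (ns ! j) (first_factor_path ns V 1 0 j) = outer (ns ! j) basis0" if "j < length ns" for j
  proof -
    have "(\<Sum>r<ns ! j. (cmod (towards_basis0 (V 0 j) 1 r))\<^sup>2) = 1"
      using that assms(2) by (simp add: towards_basis0_def sum_cmod_phase_basis0)
    then have "first_factor_path ns V 1 0 j = (\<lambda>r. phase (V 0 j 0) * basis0 r)"
      using that by (simp add: first_factor_path_def normalized_eq_self fun_eq_iff towards_basis0_def)
    then show ?thesis
      by (simp add: outer_phase cmod_phase)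
  qed
  then show ?thesis
    unfolding mixture_first_weight[OF assms(1)] base_state_def kron_outer_def
    by (intro arg_cong[where f = "kron ns"] map_cong) auto
qed

lemma continuous_on_first_factor_path:
  assumes "(c, V) \<in> mixture_params k ns" "k > 0" "\<forall>n\<in>set ns. n > 0"
  shows "continuous_on {0..1} (first_factor_path ns V)"
proof (intro continuous_on_coordinatewise_then_product)
  fix l j r
  show "continuous_on {0..1} (\<lambda>t. first_factor_path ns V t l j r)"
  proof (cases "l = 0 \<and> j < length ns")
    case True
    have "(\<Sum>r<ns ! j. (cmod (V 0 j r))\<^sup>2) = 1"
      using assms(1,2) True by (simp add: mixture_params_def)
    then have "sqrt (\<Sum>r<ns ! j. (cmod (towards_basis0 (V 0 j) t r))\<^sup>2) \<noteq> 0" if "t \<in> {0..1}" for t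
      using towards_basis0_nonzero[where n = "ns ! j" and v = "V 0 j" and t = t] assms(3) True that
      by auto
    then show ?thesis
      using True unfolding first_factor_path_def normalized_def towards_basis0_def
      by (auto intro!: continuous_intros)
  next
    case False
    then show ?thesis
      unfolding first_factor_path_def if_not_P[OF False] by simp
  qed
qed

lemma connected_component_base_state:
  assumes "(c, V) \<in> mixture_params k ns" "k > 0" "\<forall>n\<in>set ns. n > 0"
  shows "connected_component (Sigma_pure k ns) (mixture k ns (c, V)) (base_state ns)"
proof -
  define weight_segment where
    "weight_segment = (\<lambda>t. (\<lambda>l. (1 - t) * c l + t * first_weight l, V)) ` {0..1::real}"
  define factor_segment where
    "factor_segment = (\<lambda>t. (first_weight, first_factor_path ns V t)) ` {0..1::real}"
  have "(c, V) \<in> weight_segment" "(first_weight, V) \<in> weight_segment"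
    unfolding weight_segment_def by (auto intro: image_eqI[of _ _ 0] image_eqI[of _ _ 1])
  moreover have "(first_weight, V) \<in> factor_segment" "(first_weight, first_factor_path ns V 1) \<in> factor_segment"
    unfolding factor_segment_def using first_factor_path_0[OF assms(1,2)]
    by (auto intro: image_eqI[of _ _ 0] image_eqI[of _ _ 1])
  moreover have "connected weight_segment"
    unfolding weight_segment_def
    by (intro connected_continuous_image connected_Icc continuous_intros continuous_on_coordinatewise_then_product)
  moreover have "connected factor_segment"
    unfolding factor_segment_def using continuous_on_first_factor_path[OF assms]
    by (intro connected_continuous_image connected_Icc continuous_on_Pair[OF continuous_on_const])
  ultimately have "connected (mixture k ns ` (weight_segment \<union> factor_segment))"
    by (intro connected_continuous_image continuous_on_mixture connected_Un) auto
  moreover have "weight_segment \<union> factor_segment \<subseteq> mixture_params k ns"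
    unfolding weight_segment_def factor_segment_def
    using weight_segment_in_mixture_params first_factor_path_in_mixture_params assms by auto
  then have "mixture k ns ` (weight_segment \<union> factor_segment) \<subseteq> Sigma_pure k ns"
    using mixture_image_subset by blast
  moreover have "mixture k ns (c, V) \<in> mixture k ns ` (weight_segment \<union> factor_segment)"
    using \<open>(c, V) \<in> weight_segment\<close> by blast
  moreover have "base_state ns \<in> mixture k ns ` (weight_segment \<union> factor_segment)"
    using \<open>(first_weight, first_factor_path ns V 1) \<in> factor_segment\<close> mixture_first_factor_path_1[OF assms(2,3)]
    by (metis UnI2 image_eqI)
  ultimately show ?thesis
    by (rule connected_componentI)
qed

lemma connected_Sigma_pure:
  assumes "k > 0" "\<forall>n\<in>set ns. n > 0"
  shows "connected (Sigma_pure k ns)"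
proof -
  have "connected_component (Sigma_pure k ns) A (base_state ns)" if A: "A \<in> Sigma_pure k ns" for A
  proof -
    obtain c V where "(c, V) \<in> mixture_params k ns" "A = mixture k ns (c, V)"
      using A Sigma_pure_eq_mixture_image[OF assms(1)] by auto
    then show ?thesis
      using connected_component_base_state assms by blast
  qed
  then show ?thesis
    unfolding connected_iff_connected_component by (meson connected_component_sym connected_component_trans)
qed

section \<open>Charts and the null-set bound\<close>

text \<open>A chart \<open>ch\<close> fixes, for every term \<open>l\<close> and factor \<open>j\<close>, an index \<open>ch l j\<close>.  The unit
  vector \<open>V l j\<close> is replaced by its multiple with entry \<open>1\<close> at \<open>ch l j\<close>; the real coordinates
  are the first \<open>k - 1\<close> weights (labels \<open>Inl l\<close>) and the real (\<open>True\<close>) and imaginary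
  (\<open>False\<close>) parts of the remaining entries (labels \<open>Inr (l, j, r, _)\<close>).  If \<open>ch l j\<close> is an
  entry of maximal modulus, all coordinates lie in \<open>[-1, 1]\<close>.\<close>

type_synonym chart_label = "nat + nat \<times> nat \<times> nat \<times> bool"

definition charts :: "nat \<Rightarrow> nat list \<Rightarrow> (nat \<Rightarrow> nat \<Rightarrow> nat) set" where
  "charts k ns = PiE {..<k} (\<lambda>l. PiE {..<length ns} (\<lambda>j. {..<ns ! j}))"

definition chart_labels :: "nat \<Rightarrow> nat list \<Rightarrow> (nat \<Rightarrow> nat \<Rightarrow> nat) \<Rightarrow> chart_label set" where
  "chart_labels k ns ch = Inl ` {..<k - 1} \<union>
     Inr ` (SIGMA l:{..<k}. SIGMA j:{..<length ns}. ({..<ns ! j} - {ch l j}) \<times> UNIV)"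

definition chart_weight :: "nat \<Rightarrow> (chart_label \<Rightarrow> real) \<Rightarrow> nat \<Rightarrow> real" where
  "chart_weight k x l = (if l < k - 1 then x (Inl l) else 1 - (\<Sum>l'<k - 1. x (Inl l')))"

definition chart_vector :: "(nat \<Rightarrow> nat \<Rightarrow> nat) \<Rightarrow> (chart_label \<Rightarrow> real) \<Rightarrow> nat \<Rightarrow> nat \<Rightarrow> nat \<Rightarrow> complex" where
  "chart_vector ch x l j r =
     (if r = ch l j then 1 else Complex (x (Inr (l, j, r, True))) (x (Inr (l, j, r, False))))"

text \<open>This is \<open>outer n\<close> of the normalisation of \<open>w\<close>, written as a rational function of \<open>w\<close>
  so that it is visibly Lipschitz where the denominator has modulus at least \<open>1\<close>.\<close>

definition normalized_outer :: "nat \<Rightarrow> (nat \<Rightarrow> complex) \<Rightarrow> cmat" where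
  "normalized_outer n w = (\<lambda>a b. if a < n \<and> b < n then w a * cnj (w b) / (\<Sum>r<n. w r * cnj (w r)) else 0)"

definition chart_map :: "nat \<Rightarrow> nat list \<Rightarrow> (nat \<Rightarrow> nat \<Rightarrow> nat) \<Rightarrow> (chart_label \<Rightarrow> real) \<Rightarrow> cmat" where
  "chart_map k ns ch x = (\<lambda>a b. \<Sum>l<k. complex_of_real (chart_weight k x l) *
      kron ns (map (\<lambda>j. normalized_outer (ns ! j) (chart_vector ch x l j)) [0..<length ns]) a b)"

lemma finite_charts: "finite (charts k ns)"
  unfolding charts_def by (intro finite_PiE) auto

lemma finite_chart_labels: "finite (chart_labels k ns ch)"
  unfolding chart_labels_def by (intro finite_UnI finite_imageI finite_SigmaI) auto

lemma card_chart_labels: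
  assumes "ch \<in> charts k ns"
  shows "card (chart_labels k ns ch) = k - 1 + k * (\<Sum>j<length ns. 2 * (ns ! j - 1))"
proof -
  have "card (({..<ns ! j} - {ch l j}) \<times> (UNIV :: bool set)) = 2 * (ns ! j - 1)"
    if "l < k" "j < length ns" for l j
    using assms that unfolding charts_def by (auto simp: card_cartesian_product PiE_iff)
  then have "card (SIGMA l:{..<k}. SIGMA j:{..<length ns}. ({..<ns ! j} - {ch l j}) \<times> (UNIV :: bool set))
      = k * (\<Sum>j<length ns. 2 * (ns ! j - 1))"
    by (simp add: card_SigmaI mult.commute)
  then show ?thesis
    unfolding chart_labels_def
    by (subst card_Un_disjoint) (auto simp: card_image intro!: finite_SigmaI)
qed

lemma bdd_lipschitz_chart_weight:
  "bdd_lipschitz (chart_labels k ns ch) (\<lambda>x. complex_of_real (chart_weight k x l))"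
proof -
  have coord: "bdd_lipschitz (chart_labels k ns ch) (\<lambda>x. complex_of_real (x (Inl l')))" if "l' < k - 1" for l'
    using that by (intro bdd_lipschitz_coord finite_chart_labels) (simp add: chart_labels_def)
  show ?thesis
  proof (cases "l < k - 1")
    case True
    then show ?thesis
      unfolding chart_weight_def using coord by simp
  next
    case False
    have "bdd_lipschitz (chart_labels k ns ch) (\<lambda>x. 1 - (\<Sum>l'<k - 1. complex_of_real (x (Inl l'))))"
      using coord by (intro bdd_lipschitz_diff bdd_lipschitz_const bdd_lipschitz_sum) auto
    then show ?thesis
      unfolding chart_weight_def using False by simp
  qed
qed

lemma bdd_lipschitz_chart_vector:
  assumes "l < k" "j < length ns" "r < ns ! j"
  shows "bdd_lipschitz (chart_labels k ns ch) (\<lambda>x. chart_vector ch x l j r)"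
proof (cases "r = ch l j")
  case False
  then have "Inr (l, j, r, s) \<in> chart_labels k ns ch" for s
    using assms unfolding chart_labels_def by auto
  then have "bdd_lipschitz (chart_labels k ns ch) (\<lambda>x. complex_of_real (x (Inr (l, j, r, True))) +
      \<i> * complex_of_real (x (Inr (l, j, r, False))))"
    by (intro bdd_lipschitz_add bdd_lipschitz_mult bdd_lipschitz_const bdd_lipschitz_coord finite_chart_labels)
  then show ?thesis
    unfolding chart_vector_def Complex_eq using False by simp
qed (simp add: chart_vector_def bdd_lipschitz_const)

lemma cmod_sum_mult_cnj_ge:
  fixes w :: "nat \<Rightarrow> complex"
  assumes "i < n" "w i = 1"
  shows "1 \<le> cmod (\<Sum>r<n. w r * cnj (w r))"
proof -
  have "1 = (cmod (w i))\<^sup>2"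
    using assms(2) by simp
  also have "\<dots> \<le> (\<Sum>r<n. (cmod (w r))\<^sup>2)"
    using assms(1) by (intro member_le_sum) auto
  also have "\<dots> = cmod (\<Sum>r<n. w r * cnj (w r))"
    unfolding sum_mult_cnj norm_of_real by (simp add: sum_nonneg)
  finally show ?thesis .
qed

lemma bdd_lipschitz_chart_map:
  assumes "ch \<in> charts k ns"
  shows "bdd_lipschitz (chart_labels k ns ch) (\<lambda>x. chart_map k ns ch x a b)"
proof -
  have ch: "ch l j < ns ! j" if "l < k" "j < length ns" for l j
    using assms that unfolding charts_def by (auto simp: PiE_iff)
  have outer: "bdd_lipschitz (chart_labels k ns ch) (\<lambda>x. normalized_outer (ns ! j) (chart_vector ch x l j) a' b')"
    if "l < k" "j < length ns" for l j a' b'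
  proof (cases "a' < ns ! j \<and> b' < ns ! j")
    case True
    have "bdd_lipschitz (chart_labels k ns ch) (\<lambda>x. chart_vector ch x l j a' * cnj (chart_vector ch x l j b') /
        (\<Sum>r<ns ! j. chart_vector ch x l j r * cnj (chart_vector ch x l j r)))"
      using that True ch[OF that]
      by (intro bdd_lipschitz_divide bdd_lipschitz_mult bdd_lipschitz_cnj bdd_lipschitz_sum
          bdd_lipschitz_chart_vector cmod_sum_mult_cnj_ge[of "ch l j"]) (auto simp: chart_vector_def)
    then show ?thesis
      unfolding normalized_outer_def using True by simp
  next
    case False
    then have "normalized_outer (ns ! j) w a' b' = 0" for w
      unfolding normalized_outer_def by auto
    then show ?thesis
      by (simp add: bdd_lipschitz_const)
  qed
  show ?thesis
    unfolding chart_map_def using outer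
    by (intro bdd_lipschitz_sum bdd_lipschitz_mult bdd_lipschitz_chart_weight bdd_lipschitz_kron) auto
qed

lemma normalized_outer_scale:
  assumes "t \<noteq> 0"
  shows "normalized_outer n (\<lambda>r. w r * t) = normalized_outer n w"
proof -
  have "(\<Sum>r<n. w r * t * cnj (w r * t)) = (t * cnj t) * (\<Sum>r<n. w r * cnj (w r))"
    by (simp add: sum_distrib_left algebra_simps)
  moreover have "w a * t * cnj (w b * t) = (t * cnj t) * (w a * cnj (w b))" for a b
    by (simp add: algebra_simps)
  moreover have "t * cnj t \<noteq> 0"
    using assms by simp
  ultimately show ?thesis
    unfolding normalized_outer_def by (simp add: fun_eq_iff)
qed

lemma normalized_outer_unit:
  assumes "(\<Sum>r<n. (cmod (v r))\<^sup>2) = 1"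
  shows "normalized_outer n v = outer n v"
proof -
  have "(\<Sum>r<n. v r * cnj (v r)) = 1"
    using assms by (simp add: sum_mult_cnj)
  then show ?thesis
    unfolding normalized_outer_def outer_def by (simp only: div_by_1)
qed

lemma exists_max_modulus_index:
  fixes v :: "nat \<Rightarrow> complex"
  assumes "n > 0" "(\<Sum>r<n. (cmod (v r))\<^sup>2) = 1"
  obtains i where "i < n" "v i \<noteq> 0" "\<And>r. r < n \<Longrightarrow> cmod (v r) \<le> cmod (v i)"
proof -
  have "Max ((\<lambda>r. cmod (v r)) ` {..<n}) \<in> (\<lambda>r. cmod (v r)) ` {..<n}"
    using assms(1) by (intro Max_in) auto
  then obtain i where "i < n" "cmod (v i) = Max ((\<lambda>r. cmod (v r)) ` {..<n})"
    by auto
  then have i: "i < n" "\<And>r. r < n \<Longrightarrow> cmod (v r) \<le> cmod (v i)"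
    by auto
  show ?thesis
  proof (rule that[OF i(1) _ i(2)])
    show "v i \<noteq> 0"
    proof
      assume "v i = 0"
      then have "(\<Sum>r<n. (cmod (v r))\<^sup>2) = 0"
        using i(2) by (intro sum.neutral) (auto intro: antisym)
      then show False
        using assms(2) by simp
    qed
  qed
qed

definition chart_point ::
    "nat \<Rightarrow> nat list \<Rightarrow> (nat \<Rightarrow> nat \<Rightarrow> nat) \<Rightarrow> (nat \<Rightarrow> real) \<Rightarrow> (nat \<Rightarrow> nat \<Rightarrow> nat \<Rightarrow> complex)
      \<Rightarrow> chart_label \<Rightarrow> real" where
  "chart_point k ns ch c V = restrict (\<lambda>lab. case lab of
       Inl l \<Rightarrow> c l
     | Inr (l, j, r, s) \<Rightarrow> (if s then Re else Im) (V l j r / V l j (ch l j))) (chart_labels k ns ch)"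

lemma chart_weight_chart_point:
  assumes "(c, V) \<in> mixture_params k ns" "l < k"
  shows "chart_weight k (chart_point k ns ch c V) l = c l"
proof (cases "l < k - 1")
  case True
  then show ?thesis
    by (simp add: chart_weight_def chart_point_def chart_labels_def)
next
  case False
  then have "l = k - 1"
    using assms(2) by simp
  moreover have "(\<Sum>l<k. c l) = (\<Sum>l<k - 1. c l) + c (k - 1)"
    using assms(2) by (metis Suc_diff_1 gr_implies_not0 not_gr_zero sum.lessThan_Suc)
  moreover have "(\<Sum>l'<k - 1. chart_point k ns ch c V (Inl l')) = (\<Sum>l'<k - 1. c l')"
    by (intro sum.cong) (auto simp: chart_point_def chart_labels_def)
  ultimately show ?thesis
    using assms(1) False by (simp add: chart_weight_def mixture_params_def)
qed

lemma chart_vector_chart_point: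
  assumes "l < k" "j < length ns" "r < ns ! j" "V l j (ch l j) \<noteq> 0"
  shows "chart_vector ch (chart_point k ns ch c V) l j r = V l j r / V l j (ch l j)"
  using assms by (auto simp: chart_vector_def chart_point_def chart_labels_def complex_eq_iff)

lemma chart_point_in_cube:
  assumes "(c, V) \<in> mixture_params k ns"
    and "\<And>l j r. l < k \<Longrightarrow> j < length ns \<Longrightarrow> r < ns ! j \<Longrightarrow> cmod (V l j r) \<le> cmod (V l j (ch l j))"
  shows "chart_point k ns ch c V \<in> cube (chart_labels k ns ch)"
proof -
  have "chart_point k ns ch c V lab \<in> {-1..1}" if lab_in: "lab \<in> chart_labels k ns ch" for lab
  proof (cases lab)
    case (Inl l)
    then show ?thesis
      using lab_in mixture_params_bounded(1)[OF assms(1), of l] by (auto simp: chart_point_def)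
  next
    case (Inr q)
    then obtain l j r s where lab: "lab = Inr (l, j, r, s)" and ljr: "l < k" "j < length ns" "r < ns ! j"
      using lab_in Inr by (cases q rule: prod_cases4) (auto simp: chart_labels_def)
    have "cmod (V l j r / V l j (ch l j)) \<le> 1"
      using assms(2)[OF ljr] by (simp add: norm_divide divide_le_eq_1)
    then have "\<bar>Re (V l j r / V l j (ch l j))\<bar> \<le> 1" "\<bar>Im (V l j r / V l j (ch l j))\<bar> \<le> 1"
      using abs_Re_le_cmod abs_Im_le_cmod order_trans by blast+
    then show ?thesis
      using lab_in unfolding lab chart_point_def by auto
  qed
  then show ?thesis
    by (auto simp: chart_point_def)
qed

lemma mixture_eq_chart_map:
  assumes "(c, V) \<in> mixture_params k ns"
    and "\<And>l j. l < k \<Longrightarrow> j < length ns \<Longrightarrow> V l j (ch l j) \<noteq> 0"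
  shows "mixture k ns (c, V) = chart_map k ns ch (chart_point k ns ch c V)"
proof -
  have "normalized_outer (ns ! j) (chart_vector ch (chart_point k ns ch c V) l j) = outer (ns ! j) (V l j)"
    if "l < k" "j < length ns" for l j
  proof -
    have "normalized_outer (ns ! j) (chart_vector ch (chart_point k ns ch c V) l j) =
        normalized_outer (ns ! j) (\<lambda>r. V l j r * inverse (V l j (ch l j)))"
      using that assms(2) unfolding normalized_outer_def
      by (simp add: chart_vector_chart_point divide_inverse fun_eq_iff)
    also have "\<dots> = outer (ns ! j) (V l j)"
      using that assms by (simp add: normalized_outer_scale normalized_outer_unit mixture_params_def)
    finally show ?thesis .
  qed
  then have maps: "map (\<lambda>j. normalized_outer (ns ! j) (chart_vector ch (chart_point k ns ch c V) l j))
        [0..<length ns] = map (\<lambda>j. outer (ns ! j) (V l j)) [0..<length ns]" if "l < k" for l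
    using that by (intro map_cong) auto
  have "complex_of_real (c l) * kron_outer ns (V l) a b =
      complex_of_real (chart_weight k (chart_point k ns ch c V) l) *
      kron ns (map (\<lambda>j. normalized_outer (ns ! j) (chart_vector ch (chart_point k ns ch c V) l j))
        [0..<length ns]) a b" if "l < k" for l a b
    by (simp only: kron_outer_def maps[OF that] chart_weight_chart_point[OF assms(1) that])
  then show ?thesis
    unfolding mixture_def chart_map_def by (intro ext sum.cong refl) simp_all
qed

lemma mixture_in_chart_image:
  assumes "(c, V) \<in> mixture_params k ns" "\<forall>n\<in>set ns. n > 0"
  shows "\<exists>ch\<in>charts k ns. \<exists>x\<in>cube (chart_labels k ns ch). mixture k ns (c, V) = chart_map k ns ch x"
proof -
  define maximal where "maximal l j i \<longleftrightarrow>
      i < ns ! j \<and> V l j i \<noteq> 0 \<and> (\<forall>r<ns ! j. cmod (V l j r) \<le> cmod (V l j i))" for l j i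
  define ch where "ch = (\<lambda>l\<in>{..<k}. \<lambda>j\<in>{..<length ns}. SOME i. maximal l j i)"
  have ch: "maximal l j (ch l j)" if "l < k" "j < length ns" for l j
  proof -
    have "ns ! j > 0"
      using assms(2) that(2) by simp
    moreover have "(\<Sum>r<ns ! j. (cmod (V l j r))\<^sup>2) = 1"
      using assms(1) that by (simp add: mixture_params_def)
    ultimately obtain i where "i < ns ! j" "V l j i \<noteq> 0" "\<And>r. r < ns ! j \<Longrightarrow> cmod (V l j r) \<le> cmod (V l j i)"
      by (rule exists_max_modulus_index) blast
    then have "maximal l j i"
      unfolding maximal_def by blast
    then have "maximal l j (SOME i. maximal l j i)"
      by (rule someI)
    then show ?thesis
      using that by (simp add: ch_def)
  qed
  have "ch \<in> charts k ns"
    unfolding charts_def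
  proof (intro PiE_I)
    show "ch l j \<in> {..<ns ! j}" if "l \<in> {..<k}" "j \<in> {..<length ns}" for l j
      using ch[of l j] that by (simp add: maximal_def)
  qed (simp_all add: ch_def)
  moreover have "chart_point k ns ch c V \<in> cube (chart_labels k ns ch)"
    using assms(1) by (rule chart_point_in_cube) (simp add: ch[unfolded maximal_def])
  moreover have "mixture k ns (c, V) = chart_map k ns ch (chart_point k ns ch c V)"
    using assms(1) by (rule mixture_eq_chart_map) (simp add: ch[unfolded maximal_def])
  ultimately show ?thesis
    by blast
qed

lemma hcoord_diff_le:
  assumes "N > 0" "i < N * N - 1"
    and "\<And>a b. a < N \<Longrightarrow> b < N \<Longrightarrow> cmod (M a b - M' a b) \<le> C"
  shows "\<bar>hcoord N M i - hcoord N M' i\<bar> \<le> C"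
proof -
  have "i div N < N" "i mod N < N"
    using assms(1,2) by (auto simp: less_mult_imp_div_less)
  moreover have "\<bar>Re u - Re v\<bar> \<le> C" "\<bar>Im u - Im v\<bar> \<le> C" if "cmod (u - v) \<le> C" for u v
    using that abs_Re_le_cmod[of "u - v"] abs_Im_le_cmod[of "u - v"] by auto
  ultimately show ?thesis
    unfolding hcoord_def using assms(2,3) by (auto simp: Let_def)
qed

lemma chart_dimension_less:
  assumes "\<forall>n\<in>set ns. n > 0" "k > 0" "ch \<in> charts k ns"
    and "real k < (\<Prod>n\<leftarrow>ns. real n ^ 2) / (1 - 2 * real (length ns) + (\<Sum>n\<leftarrow>ns. 2 * real n))"
  shows "card (chart_labels k ns ch) < prod_list ns * prod_list ns - 1"
proof -
  define S where "S = (\<Sum>j<length ns. 2 * (ns ! j - 1))"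
  have "real S = (\<Sum>j<length ns. 2 * real (ns ! j)) - 2 * real (length ns)"
    using assms(1) unfolding S_def by (simp add: of_nat_diff Suc_leI sum_subtractf sum_distrib_left)
  then have denominator: "1 - 2 * real (length ns) + (\<Sum>n\<leftarrow>ns. 2 * real n) = 1 + real S"
    by (simp add: sum_list_sum_nth atLeast0LessThan)
  have numerator: "(\<Prod>n\<leftarrow>ns. real n ^ 2) = real (prod_list ns * prod_list ns)"
    by (induction ns) (simp_all add: power2_eq_square)
  have "real k * (1 + real S) < real (prod_list ns * prod_list ns)"
    using assms(4) unfolding denominator numerator by (simp add: pos_less_divide_eq add_pos_nonneg)
  then have "real (k * (1 + S)) < real (prod_list ns * prod_list ns)"
    by (simp add: algebra_simps)
  then show ?thesis
    using card_chart_labels[OF assms(3)] assms(2) unfolding S_def of_nat_less_iff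
    by (cases k) auto
qed

lemma Sigma_pure_null:
  assumes "\<forall>n\<in>set ns. n > 0" "k > 0"
    and "real k < (\<Prod>n\<leftarrow>ns. real n ^ 2) / (1 - 2 * real (length ns) + (\<Sum>n\<leftarrow>ns. 2 * real n))"
  shows "hcoord (prod_list ns) ` Sigma_pure k ns \<in>
           null_sets (completion (PiM {..<prod_list ns * prod_list ns - 1} (\<lambda>_. lborel)))"
proof -
  define N where "N = prod_list ns"
  define M where "M = completion (PiM {..<N * N - 1} (\<lambda>_. lborel :: real measure))"
  have "N > 0"
    unfolding N_def using assms(1) by (metis gr0I prod_list_zero_iff)
  have chart_null: "(\<lambda>x. hcoord N (chart_map k ns ch x)) ` cube (chart_labels k ns ch) \<in> null_sets M"
    if ch: "ch \<in> charts k ns" for ch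
  proof -
    obtain L where L: "L \<ge> 0" "\<And>ab x y. ab \<in> {..<N} \<times> {..<N} \<Longrightarrow> x \<in> cube (chart_labels k ns ch) \<Longrightarrow>
        y \<in> cube (chart_labels k ns ch) \<Longrightarrow>
        cmod (chart_map k ns ch x (fst ab) (snd ab) - chart_map k ns ch y (fst ab) (snd ab))
          \<le> L * l1_dist (chart_labels k ns ch) x y"
      using bdd_lipschitz_uniform[of "{..<N} \<times> {..<N}" "chart_labels k ns ch"
          "\<lambda>ab x. chart_map k ns ch x (fst ab) (snd ab)"] bdd_lipschitz_chart_map[OF ch] by blast
    show ?thesis
      unfolding M_def
    proof (rule lipschitz_image_cube_null[OF finite_chart_labels _ L(1)])
      show "card (chart_labels k ns ch) < N * N - 1"
        unfolding N_def using chart_dimension_less[OF assms(1,2) ch assms(3)] .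
      show "\<bar>hcoord N (chart_map k ns ch x) i - hcoord N (chart_map k ns ch y) i\<bar>
          \<le> L * l1_dist (chart_labels k ns ch) x y"
        if "x \<in> cube (chart_labels k ns ch)" "y \<in> cube (chart_labels k ns ch)" "i < N * N - 1" for x y i
        using \<open>N > 0\<close> that(3) by (rule hcoord_diff_le) (use L(2) that(1,2) in auto)
    qed (simp add: hcoord_def)
  qed
  have "hcoord N ` Sigma_pure k ns \<subseteq>
      (\<Union>ch\<in>charts k ns. (\<lambda>x. hcoord N (chart_map k ns ch x)) ` cube (chart_labels k ns ch))"
    using mixture_in_chart_image[OF _ assms(1)] Sigma_pure_eq_mixture_image[OF assms(2)] by fastforce
  moreover have "(\<Union>ch\<in>charts k ns. (\<lambda>x. hcoord N (chart_map k ns ch x)) ` cube (chart_labels k ns ch))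
      \<in> null_sets M"
    using chart_null finite_charts by (intro null_sets_UN') (auto intro: countable_finite)
  ultimately show ?thesis
    using null_sets_completion_subset unfolding M_def N_def by blast
qed

lemma closed_proper_subset_not_dense:
  assumes "closed S" "S \<subseteq> T" "S \<noteq> T"
  shows "\<not> T \<subseteq> closure S \<and> openin (top_of_set T) (T - S)"
proof
  show "\<not> T \<subseteq> closure S"
    using assms by (simp add: closure_closed)
  have "openin (top_of_set T) (T \<inter> - S)"
    using assms(1) by (intro openin_open_Int) (simp add: open_Compl)
  then show "openin (top_of_set T) (T - S)"
    by (simp add: Diff_eq)
qed

theorem theorem3:
  fixes ns :: "nat list" and k :: nat
  assumes "length ns \<ge> 1" and "\<forall>n\<in>set ns. n > 0" and "k > 0"
  shows "connected (Sigma_pure k ns) \<and> compact (Sigma_pure k ns)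
           \<and> Sigma_pure k ns \<subseteq> Sigma_sep ns
           \<and> (Sigma_pure k ns \<noteq> Sigma_sep ns \<longrightarrow>
                \<not> Sigma_sep ns \<subseteq> closure (Sigma_pure k ns)
                \<and> openin (top_of_set (Sigma_sep ns)) (Sigma_sep ns - Sigma_pure k ns))
           \<and> (real k < (\<Prod>n\<leftarrow>ns. real n ^ 2) /
                   (1 - 2 * real (length ns) + (\<Sum>n\<leftarrow>ns. 2 * real n)) \<longrightarrow>
         hcoord (prod_list ns) ` Sigma_pure k ns \<in>
           null_sets (completion (PiM {..<prod_list ns * prod_list ns - 1} (\<lambda>_. lborel))))"
proof -
  have "compact (Sigma_pure k ns)"
    using compact_Sigma_pure[OF assms(3)] .
  moreover have "Sigma_pure k ns \<subseteq> Sigma_sep ns"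
    unfolding Sigma_pure_def by blast
  ultimately show ?thesis
    using connected_Sigma_pure[OF assms(3,2)] closed_proper_subset_not_dense[OF compact_imp_closed]
      Sigma_pure_null[OF assms(2,3)]
    by blast
qed

end
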